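(* Let $n\ge2$, let $M$ be a nonderogatory $d\times d$ matrix with minimal polynomial $\mathbf p$, and let $\mathcal B$ be a generic maximal subalgebra of $\mathcal T_{n,d}[\mathcal P(M)]$. For $B\in\mathcal B$ write $B_j=\mathbf b_j(M)$ with $\mathbf b_j\in\mathbb C[X]$. Then: (i) for each $j\in\{\pm1,\dots,\pm(n-1)\}$ there exists $B\in\mathcal B$ with $B_j\neq0$; (ii) letting $\mathbf s_j$ be the (monic) greatest common divisor of $\mathbf p$ and all the $\mathbf b_j$, $B\in\mathcal B$, we have $\mathbf s_1=\dots=\mathbf s_{n-1}=:\mathbf s_+$ and $\mathbf s_{-1}=\dots=\mathbf s_{-(n-1)}=:\mathbf s_-$; consequently every $B\in\mathcal B$ can be written as $B_j=\mathbf s_+(M)\tilde{\mathbf b}_j(M)$ for $j\ge1$ and $B_j=\mathbf s_-(M)\tilde{\mathbf b}_j(M)$ for $j\le-1$, with $\tilde{\mathbf b}_j\in\mathbb C[X]$; (iii) there exists $A\in\mathcal B$ for which the polynomials $\tilde{\mathbf a}_j$ in (ii) can be chosen relatively prime to $\mathbf p$ for every $j=\pm1,\dots,\pm(n-1)$; (iv) $\mathbf s_+\mathbf s_-$ divides $\mathbf p$.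
   Context: A nonderogatory matrix is one whose minimal polynomial equals its characteristic polynomial; $\mathcal P(M)$ is the algebra of polynomials in $M$. $\mathcal T_{n,d}[\mathcal P(M)]$ is the set of $n\times n$ block Toeplitz matrices $(B_{i-j})_{i,j=0}^{n-1}$ with all $B_m\in\mathcal P(M)$. A maximal subalgebra of $\mathcal T_{n,d}[\mathcal P(M)]$ is a subalgebra (linear subspace closed under multiplication) contained in it and maximal under inclusion among such. Let $\mathfrak B_u$ be the set of $B\in\mathcal T_{n,d}[\mathcal P(M)]$ with $B_i=0$ for all $i\ge1$ (upper triangular) and $\mathfrak B_l$ the set with $B_i=0$ for all $i\le-1$ (lower triangular). An algebra is called generic if it is contained neither in $\mathfrak B_u$ nor in $\mathfrak B_l$. *)

theory Defs
  imports "Jordan_Normal_Form.Jordan_Normal_Form" "HOL-Computational_Algebra.Polynomial_Factorial" "HOL-Computational_Algebra.Field_as_Ring"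
begin

definition mat_poly_eval :: "nat \<Rightarrow> complex mat \<Rightarrow> complex poly \<Rightarrow> complex mat" where
  "mat_poly_eval d M q = fold_coeffs (\<lambda>a A. a \<cdot>\<^sub>m 1\<^sub>m d + M * A) q (0\<^sub>m d d)"

definition is_min_poly :: "nat \<Rightarrow> complex mat \<Rightarrow> complex poly \<Rightarrow> bool" where
  "is_min_poly d M q \<longleftrightarrow> monic q \<and> mat_poly_eval d M q = 0\<^sub>m d d \<and>
     (\<forall>r. r \<noteq> 0 \<and> mat_poly_eval d M r = 0\<^sub>m d d \<longrightarrow> degree q \<le> degree r)"

definition nonderogatory :: "nat \<Rightarrow> complex mat \<Rightarrow> bool" where
  "nonderogatory d M \<longleftrightarrow> is_min_poly d M (char_poly M)"

definition polys_in :: "nat \<Rightarrow> complex mat \<Rightarrow> complex mat set" where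
  "polys_in d M = {mat_poly_eval d M q | q. True}"

definition block_toeplitz :: "nat \<Rightarrow> nat \<Rightarrow> (int \<Rightarrow> complex mat) \<Rightarrow> complex mat" where
  "block_toeplitz n d B = mat (n*d) (n*d)
     (\<lambda>(r,c). B (int (r div d) - int (c div d)) $$ (r mod d, c mod d))"

definition toeplitz_set :: "nat \<Rightarrow> nat \<Rightarrow> complex mat \<Rightarrow> complex mat set" where
  "toeplitz_set n d M = {block_toeplitz n d B | B. \<forall>m. B m \<in> polys_in d M}"

definition toeplitz_upper :: "nat \<Rightarrow> nat \<Rightarrow> complex mat \<Rightarrow> complex mat set" where
  "toeplitz_upper n d M = {block_toeplitz n d B | B. (\<forall>m. B m \<in> polys_in d M) \<and>
      (\<forall>i\<ge>1. B i = 0\<^sub>m d d)}"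

definition toeplitz_lower :: "nat \<Rightarrow> nat \<Rightarrow> complex mat \<Rightarrow> complex mat set" where
  "toeplitz_lower n d M = {block_toeplitz n d B | B. (\<forall>m. B m \<in> polys_in d M) \<and>
      (\<forall>i\<le>-1. B i = 0\<^sub>m d d)}"

text \<open>The block B_j of a block Toeplitz matrix X (read off at block position (j,0) or (0,-j)).\<close>
definition toeplitz_block :: "nat \<Rightarrow> complex mat \<Rightarrow> int \<Rightarrow> complex mat" where
  "toeplitz_block d X j = mat d d (\<lambda>(r,c). X $$ (nat j * d + r, nat (- j) * d + c))"

definition is_subalgebra :: "nat \<Rightarrow> complex mat set \<Rightarrow> bool" where
  "is_subalgebra N S \<longleftrightarrow> S \<subseteq> carrier_mat N N \<and> 0\<^sub>m N N \<in> S \<and>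
     (\<forall>A\<in>S. \<forall>B\<in>S. A + B \<in> S \<and> A * B \<in> S) \<and> (\<forall>c. \<forall>A\<in>S. c \<cdot>\<^sub>m A \<in> S)"

definition maximal_subalgebra_in :: "nat \<Rightarrow> complex mat set \<Rightarrow> complex mat set \<Rightarrow> bool" where
  "maximal_subalgebra_in N T S \<longleftrightarrow> is_subalgebra N S \<and> S \<subseteq> T \<and>
     (\<forall>S'. is_subalgebra N S' \<and> S' \<subseteq> T \<and> S \<subseteq> S' \<longrightarrow> S' = S)"

definition generic_alg :: "nat \<Rightarrow> nat \<Rightarrow> complex mat \<Rightarrow> complex mat set \<Rightarrow> bool" where
  "generic_alg n d M S \<longleftrightarrow> \<not> S \<subseteq> toeplitz_upper n d M \<and> \<not> S \<subseteq> toeplitz_lower n d M"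

definition block_gcd :: "nat \<Rightarrow> complex mat \<Rightarrow> complex poly \<Rightarrow> complex mat set \<Rightarrow> int \<Rightarrow> complex poly" where
  "block_gcd d M p S j = Gcd (insert p {b. \<exists>X\<in>S. mat_poly_eval d M b = toeplitz_block d X j})"

end

theory Submission
  imports Defs "HOL-Computational_Algebra.Fundamental_Theorem_Algebra"
begin

text \<open>A block Toeplitz matrix with entries in \<open>P(M) \<cong> \<complex>[X]/(p)\<close> is given by a symbol
  \<open>\<alpha> : \<int> \<rightarrow> \<complex>[X]\<close>, determined modulo \<open>p\<close>. For \<open>1 \<le> a \<le> n - 1\<close> call \<open>(\<alpha> a, \<alpha> (a - n))\<close>
  a block pair. The product of two such matrices is again Toeplitz iff every \<open>2 \<times> 2\<close> determinant
  formed by a block pair of the first factor and one of the second vanishes modulo \<open>p\<close>, and then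
  the block pairs of the product are \<open>\<complex>[X]\<close>-combinations of those of the factors. Hence for a
  maximal subalgebra \<open>S\<close> the module \<open>N\<close> generated by the block pairs of \<open>S\<close> (and by
  \<open>(0, p / g)\<close>, \<open>g\<close> the gcd of \<open>p\<close> and all upper blocks) is isotropic, the Toeplitz matrices
  with all block pairs in \<open>N\<close> form a subalgebra containing \<open>S\<close>, and maximality makes it \<open>S\<close>.
  So the polynomials representing \<open>B\<^sub>j\<close> are the first components of \<open>N\<close> and those representing
  \<open>B\<^sub>-\<^sub>j\<close> the second components, for every \<open>j\<close>; the statements about the gcds follow from
  \<open>N\<close> being a module, and the nonvanishing blocks from genericity.\<close>

section \<open>Evaluating polynomials at a matrix\<close>

lemma zero_smult_mat [simp]: "(0::'a::semiring_0) \<cdot>\<^sub>m A = 0\<^sub>m (dim_row A) (dim_col A)"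
  by (rule eq_matI) auto

lemma mat_poly_eval_0 [simp]: "mat_poly_eval d M 0 = 0\<^sub>m d d"
  by (simp add: mat_poly_eval_def)

lemma mat_poly_eval_pCons:
  assumes "M \<in> carrier_mat d d"
  shows "mat_poly_eval d M (pCons a q) = a \<cdot>\<^sub>m 1\<^sub>m d + M * mat_poly_eval d M q"
proof (cases "a = 0 \<and> q = 0")
  case True
  with assms show ?thesis by simp
next
  case False
  then show ?thesis
    by (auto simp: mat_poly_eval_def fold_coeffs_pCons_coeff_not_0_eq fold_coeffs_pCons_not_0_0_eq)
qed

lemma mat_poly_eval_carrier [simp]:
  assumes "M \<in> carrier_mat d d"
  shows "mat_poly_eval d M q \<in> carrier_mat d d"
  by (induct q rule: pCons_induct) (use assms in \<open>simp_all add: mat_poly_eval_pCons\<close>)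

lemma mat_poly_eval_dim [simp]:
  assumes "M \<in> carrier_mat d d"
  shows "dim_row (mat_poly_eval d M q) = d" "dim_col (mat_poly_eval d M q) = d"
  using mat_poly_eval_carrier[OF assms] by auto

lemma mat_poly_eval_add:
  assumes M: "M \<in> carrier_mat d d"
  shows "mat_poly_eval d M (q + r) = mat_poly_eval d M q + mat_poly_eval d M r"
proof (induct q r rule: poly_induct2)
  case 0
  then show ?case using M by simp
next
  case (pCons a q b r)
  let ?q = "mat_poly_eval d M q" and ?r = "mat_poly_eval d M r"
  have "mat_poly_eval d M (pCons a q + pCons b r) = (a + b) \<cdot>\<^sub>m 1\<^sub>m d + M * (?q + ?r)"
    using pCons M by (simp add: mat_poly_eval_pCons)
  also have "\<dots> = (a + b) \<cdot>\<^sub>m 1\<^sub>m d + (M * ?q + M * ?r)"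
    using mult_add_distrib_mat[OF M mat_poly_eval_carrier[OF M] mat_poly_eval_carrier[OF M]] by simp
  also have "\<dots> = (a \<cdot>\<^sub>m 1\<^sub>m d + M * ?q) + (b \<cdot>\<^sub>m 1\<^sub>m d + M * ?r)"
    by (rule eq_matI) (use M in \<open>auto simp: algebra_simps\<close>)
  finally show ?case using M by (simp add: mat_poly_eval_pCons)
qed

lemma mat_poly_eval_smult:
  assumes M: "M \<in> carrier_mat d d"
  shows "mat_poly_eval d M (Polynomial.smult c q) = c \<cdot>\<^sub>m mat_poly_eval d M q"
proof (induct q rule: pCons_induct)
  case (pCons a q)
  show ?case using pCons M
    by (simp add: mat_poly_eval_pCons add_smult_distrib_left_mat mult_smult_distrib)
       (rule eq_matI, auto simp: algebra_simps)
qed simp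

lemma mat_poly_eval_mult:
  assumes M: "M \<in> carrier_mat d d"
  shows "mat_poly_eval d M (q * r) = mat_poly_eval d M q * mat_poly_eval d M r"
proof (induct q rule: pCons_induct)
  case 0
  then show ?case using M by (simp add: left_mult_zero_mat[of _ d d])
next
  case (pCons a q)
  let ?q = "mat_poly_eval d M q" and ?r = "mat_poly_eval d M r"
  have "mat_poly_eval d M (pCons a q * r) = mat_poly_eval d M (Polynomial.smult a r + pCons 0 (q * r))"
    by simp
  also have "\<dots> = a \<cdot>\<^sub>m ?r + M * (?q * ?r)"
    using M pCons mult_carrier_mat[OF M mult_carrier_mat[of ?q d d ?r d]]
    by (simp add: mat_poly_eval_add mat_poly_eval_smult mat_poly_eval_pCons)
  also have "\<dots> = (a \<cdot>\<^sub>m 1\<^sub>m d) * ?r + (M * ?q) * ?r"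
    using assoc_mult_mat[OF M mat_poly_eval_carrier[OF M] mat_poly_eval_carrier[OF M]]
      mult_smult_assoc_mat[OF one_carrier_mat mat_poly_eval_carrier[OF M]] M by simp
  also have "\<dots> = (a \<cdot>\<^sub>m 1\<^sub>m d + M * ?q) * ?r"
    by (rule add_mult_distrib_mat[symmetric, of _ d d]) (use M in auto)
  finally show ?case using M by (simp add: mat_poly_eval_pCons)
qed

lemma index_mat_poly_eval_sum:
  assumes M: "M \<in> carrier_mat d d" and "finite K" and "x < d" and "y < d"
  shows "mat_poly_eval d M (\<Sum>k\<in>K. f k) $$ (x, y) = (\<Sum>k\<in>K. mat_poly_eval d M (f k) $$ (x, y))"
  using \<open>finite K\<close>
proof (induct K rule: finite_induct)
  case (insert k K)
  then show ?case
    using assms by (simp add: mat_poly_eval_add[OF M])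
qed (use assms in simp)

lemma mat_poly_eval_eq_0_iff:
  assumes M: "M \<in> carrier_mat d d" and min_poly: "is_min_poly d M p"
  shows "mat_poly_eval d M q = 0\<^sub>m d d \<longleftrightarrow> p dvd q"
proof
  have p0: "mat_poly_eval d M p = 0\<^sub>m d d" and "p \<noteq> 0"
    and least: "\<And>r. r \<noteq> 0 \<Longrightarrow> mat_poly_eval d M r = 0\<^sub>m d d \<Longrightarrow> degree p \<le> degree r"
    using min_poly unfolding is_min_poly_def by auto
  assume q0: "mat_poly_eval d M q = 0\<^sub>m d d"
  have "mat_poly_eval d M q = mat_poly_eval d M (q div p) * mat_poly_eval d M p + mat_poly_eval d M (q mod p)"
    by (metis M div_mult_mod_eq mat_poly_eval_add mat_poly_eval_mult)
  then have "mat_poly_eval d M (q mod p) = 0\<^sub>m d d"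
    using q0 p0 M by (simp add: right_mult_zero_mat[of _ d d])
  then have "q mod p = 0"
    using least[of "q mod p"] degree_mod_less[OF \<open>p \<noteq> 0\<close>, of q] by fastforce
  then show "p dvd q" by auto
next
  assume "p dvd q"
  then obtain k where "q = p * k" by auto
  then show "mat_poly_eval d M q = 0\<^sub>m d d"
    using min_poly M by (simp add: is_min_poly_def mat_poly_eval_mult left_mult_zero_mat[of _ d d])
qed

lemma mat_poly_eval_eq_iff:
  assumes M: "M \<in> carrier_mat d d" and min_poly: "is_min_poly d M p"
  shows "mat_poly_eval d M a = mat_poly_eval d M b \<longleftrightarrow> p dvd (a - b)"
proof -
  have "mat_poly_eval d M a = mat_poly_eval d M b + mat_poly_eval d M (a - b)"
    by (metis M add.commute diff_add_cancel mat_poly_eval_add)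
  then have "mat_poly_eval d M a $$ (i, j) = mat_poly_eval d M b $$ (i, j) + mat_poly_eval d M (a - b) $$ (i, j)"
    if "i < d" "j < d" for i j
    using that M by simp
  then show ?thesis
    unfolding mat_poly_eval_eq_0_iff[OF M min_poly, symmetric] using M by (auto simp: mat_eq_iff)
qed

section \<open>Block Toeplitz matrices with polynomial symbols\<close>

definition poly_toeplitz :: "nat \<Rightarrow> nat \<Rightarrow> complex mat \<Rightarrow> (int \<Rightarrow> complex poly) \<Rightarrow> complex mat" where
  "poly_toeplitz n d M \<alpha> = block_toeplitz n d (\<lambda>m. mat_poly_eval d M (\<alpha> m))"

lemma block_toeplitz_dim [simp]:
  "dim_row (block_toeplitz n d B) = n * d" "dim_col (block_toeplitz n d B) = n * d"
  by (simp_all add: block_toeplitz_def)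

lemma index_block_toeplitz:
  "r < n * d \<Longrightarrow> c < n * d \<Longrightarrow>
    block_toeplitz n d B $$ (r, c) = B (int (r div d) - int (c div d)) $$ (r mod d, c mod d)"
  by (simp add: block_toeplitz_def)

lemma mod_less_of_less_mult: "r < n * d \<Longrightarrow> r mod d < (d::nat)"
  by (cases "d = 0") auto

lemma block_offset_less: "i < n \<Longrightarrow> x < d \<Longrightarrow> i * d + x < n * (d::nat)"
proof -
  assume "i < n" "x < d"
  then have "i * d + x < Suc i * d" by simp
  also have "\<dots> \<le> n * d" using \<open>i < n\<close> by (intro mult_le_mono1) simp
  finally show ?thesis .
qed

lemma index_poly_toeplitz:
  assumes "i < n" "j < n" "x < d" "y < d"
  shows "poly_toeplitz n d M \<alpha> $$ (i * d + x, j * d + y) = mat_poly_eval d M (\<alpha> (int i - int j)) $$ (x, y)"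
  using assms by (simp add: poly_toeplitz_def index_block_toeplitz block_offset_less)

lemma toeplitz_block_block_toeplitz:
  assumes "B j \<in> carrier_mat d d" "\<bar>j\<bar> < int n"
  shows "toeplitz_block d (block_toeplitz n d B) j = B j"
proof (rule eq_matI)
  fix r c
  assume "r < dim_row (B j)" "c < dim_col (B j)"
  then have "r < d" "c < d" using assms by auto
  moreover have "nat j < n" "nat (- j) < n" "int (nat j) - int (nat (- j)) = j"
    using assms(2) by auto
  ultimately show "toeplitz_block d (block_toeplitz n d B) j $$ (r, c) = B j $$ (r, c)"
    by (simp add: toeplitz_block_def index_block_toeplitz block_offset_less)
qed (use assms in \<open>auto simp: toeplitz_block_def\<close>)

lemma toeplitz_block_poly_toeplitz [simp]:
  "M \<in> carrier_mat d d \<Longrightarrow> \<bar>j\<bar> < int n \<Longrightarrow>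
    toeplitz_block d (poly_toeplitz n d M \<alpha>) j = mat_poly_eval d M (\<alpha> j)"
  unfolding poly_toeplitz_def by (rule toeplitz_block_block_toeplitz) auto

lemma block_toeplitz_cong:
  assumes "\<And>m. \<bar>m\<bar> < int n \<Longrightarrow> B m = B' m"
  shows "block_toeplitz n d B = block_toeplitz n d B'"
proof (rule eq_matI)
  fix r c
  assume "r < dim_row (block_toeplitz n d B')" "c < dim_col (block_toeplitz n d B')"
  then have rc: "r < n * d" "c < n * d" by auto
  then have "r div d < n" "c div d < n" by (simp_all add: less_mult_imp_div_less)
  then show "block_toeplitz n d B $$ (r, c) = block_toeplitz n d B' $$ (r, c)"
    using rc assms by (simp add: index_block_toeplitz)
qed auto

lemma toeplitz_set_eq: "toeplitz_set n d M = range (poly_toeplitz n d M)"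
proof
  show "toeplitz_set n d M \<subseteq> range (poly_toeplitz n d M)"
  proof
    fix X
    assume "X \<in> toeplitz_set n d M"
    then obtain B where B: "X = block_toeplitz n d B" "\<forall>m. \<exists>q. B m = mat_poly_eval d M q"
      unfolding toeplitz_set_def polys_in_def by blast
    then obtain \<alpha> where "\<forall>m. B m = mat_poly_eval d M (\<alpha> m)" by metis
    then show "X \<in> range (poly_toeplitz n d M)"
      using B(1) by (auto simp: poly_toeplitz_def intro!: image_eqI[of _ _ \<alpha>] arg_cong[of _ _ "block_toeplitz n d"])
  qed
qed (auto simp: toeplitz_set_def polys_in_def poly_toeplitz_def)

lemma poly_toeplitz_add:
  assumes "M \<in> carrier_mat d d"
  shows "poly_toeplitz n d M \<alpha> + poly_toeplitz n d M \<beta> = poly_toeplitz n d M (\<lambda>m. \<alpha> m + \<beta> m)"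
  by (rule eq_matI) (use assms in \<open>auto simp: poly_toeplitz_def index_block_toeplitz
      mat_poly_eval_add mod_less_of_less_mult\<close>)

lemma poly_toeplitz_smult:
  assumes "M \<in> carrier_mat d d"
  shows "c \<cdot>\<^sub>m poly_toeplitz n d M \<alpha> = poly_toeplitz n d M (\<lambda>m. [:c:] * \<alpha> m)"
  by (rule eq_matI) (use assms in \<open>auto simp: poly_toeplitz_def index_block_toeplitz
      mat_poly_eval_smult mod_less_of_less_mult\<close>)

lemma poly_toeplitz_zero: "poly_toeplitz n d M (\<lambda>_. 0) = 0\<^sub>m (n * d) (n * d)"
  by (rule eq_matI) (auto simp: poly_toeplitz_def index_block_toeplitz mod_less_of_less_mult)

lemma poly_toeplitz_mem_toeplitz_upper:
  assumes M: "M \<in> carrier_mat d d" and min_poly: "is_min_poly d M p"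
    and dvd: "\<And>m. 1 \<le> m \<Longrightarrow> m < int n \<Longrightarrow> p dvd \<alpha> m"
  shows "poly_toeplitz n d M \<alpha> \<in> toeplitz_upper n d M"
proof -
  define B where "B m = (if 1 \<le> m then 0\<^sub>m d d else mat_poly_eval d M (\<alpha> m))" for m
  have "poly_toeplitz n d M \<alpha> = block_toeplitz n d B"
    unfolding poly_toeplitz_def B_def
    by (rule block_toeplitz_cong) (auto simp: mat_poly_eval_eq_0_iff[OF M min_poly] dvd)
  moreover have "B m \<in> polys_in d M" for m
    unfolding B_def polys_in_def by (auto intro: exI[of _ 0])
  ultimately show ?thesis
    unfolding toeplitz_upper_def B_def by auto
qed

lemma poly_toeplitz_mem_toeplitz_lower:
  assumes M: "M \<in> carrier_mat d d" and min_poly: "is_min_poly d M p"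
    and dvd: "\<And>m. m \<le> - 1 \<Longrightarrow> - m < int n \<Longrightarrow> p dvd \<alpha> m"
  shows "poly_toeplitz n d M \<alpha> \<in> toeplitz_lower n d M"
proof -
  define B where "B m = (if m \<le> - 1 then 0\<^sub>m d d else mat_poly_eval d M (\<alpha> m))" for m
  have "poly_toeplitz n d M \<alpha> = block_toeplitz n d B"
    unfolding poly_toeplitz_def B_def
    by (rule block_toeplitz_cong) (auto simp: mat_poly_eval_eq_0_iff[OF M min_poly] dvd)
  moreover have "B m \<in> polys_in d M" for m
    unfolding B_def polys_in_def by (auto intro: exI[of _ 0])
  ultimately show ?thesis
    unfolding toeplitz_lower_def B_def by auto
qed

section \<open>Products of block Toeplitz matrices\<close>

definition block_conv :: "nat \<Rightarrow> (int \<Rightarrow> 'a::comm_ring_1) \<Rightarrow> (int \<Rightarrow> 'a) \<Rightarrow> int \<Rightarrow> int \<Rightarrow> 'a" where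
  "block_conv n \<alpha> \<beta> i j = (\<Sum>k<n. \<alpha> (i - int k) * \<beta> (int k - j))"

definition block_pair :: "nat \<Rightarrow> (int \<Rightarrow> 'a) \<Rightarrow> int \<Rightarrow> 'a \<times> 'a" where
  "block_pair n \<alpha> a = (\<alpha> a, \<alpha> (a - int n))"

definition pair_det :: "'a \<times> 'a \<Rightarrow> 'a \<times> 'a \<Rightarrow> 'a::comm_ring" where
  "pair_det v w = fst v * snd w - snd v * fst w"

definition pairs_compatible :: "'a::comm_ring_1 \<Rightarrow> nat \<Rightarrow> (int \<Rightarrow> 'a) \<Rightarrow> (int \<Rightarrow> 'a) \<Rightarrow> bool" where
  "pairs_compatible p n \<alpha> \<beta> \<longleftrightarrow> (\<forall>a c. 1 \<le> a \<and> a \<le> int n - 1 \<and> 1 \<le> c \<and> c \<le> int n - 1 \<longrightarrow>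
     p dvd pair_det (block_pair n \<alpha> a) (block_pair n \<beta> c))"

definition conv_symbol :: "nat \<Rightarrow> (int \<Rightarrow> 'a::comm_ring_1) \<Rightarrow> (int \<Rightarrow> 'a) \<Rightarrow> int \<Rightarrow> 'a" where
  "conv_symbol n \<alpha> \<beta> m = (if 0 \<le> m then block_conv n \<alpha> \<beta> m 0 else block_conv n \<alpha> \<beta> 0 (- m))"

lemma sum_lessThan_shift_int:
  fixes f :: "int \<Rightarrow> 'a::comm_monoid_add"
  shows "(\<Sum>k<n. f (int k - 1)) + f (int n - 1) = f (- 1) + (\<Sum>k<n. f (int k))"
  by (induct n) (simp_all add: algebra_simps)

lemma block_conv_diagonal_step:
  "block_conv n \<alpha> \<beta> (i + 1) (j + 1) - block_conv n \<alpha> \<beta> i j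
     = pair_det (block_pair n \<alpha> (i + 1)) (block_pair n \<beta> (int n - 1 - j))"
proof -
  define f where "f k = \<alpha> (i - k) * \<beta> (k - j)" for k
  have "block_conv n \<alpha> \<beta> (i + 1) (j + 1) = (\<Sum>k<n. f (int k - 1))"
    unfolding block_conv_def f_def by (intro sum.cong) (simp_all add: algebra_simps)
  moreover have "block_conv n \<alpha> \<beta> i j = (\<Sum>k<n. f (int k))"
    unfolding block_conv_def f_def by simp
  ultimately show ?thesis
    using sum_lessThan_shift_int[of f n]
    by (simp add: pair_det_def block_pair_def f_def algebra_simps)
qed

text \<open>Compatibility makes the product Toeplitz modulo \<open>p\<close>: each diagonal step of
  the block convolution changes it by one of the determinants assumed divisible by \<open>p\<close>.\<close>
lemma block_conv_diagonal_dvd: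
  assumes compat: "pairs_compatible p n \<alpha> \<beta>"
    and "0 \<le> i" "0 \<le> j" "i \<le> int n - 1" "j \<le> int n - 1"
  shows "p dvd (block_conv n \<alpha> \<beta> i j - conv_symbol n \<alpha> \<beta> (i - j))"
proof -
  have step: "p dvd (block_conv n \<alpha> \<beta> (i0 + int k) (j0 + int k) - block_conv n \<alpha> \<beta> i0 j0)"
    if "0 \<le> i0" "0 \<le> j0" "i0 + int k \<le> int n - 1" "j0 + int k \<le> int n - 1" for i0 j0 k
    using that
  proof (induct k)
    case (Suc k)
    let ?c = "\<lambda>k. block_conv n \<alpha> \<beta> (i0 + int k) (j0 + int k)"
    have "p dvd pair_det (block_pair n \<alpha> (i0 + int k + 1)) (block_pair n \<beta> (int n - 1 - (j0 + int k)))"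
      using compat Suc.prems unfolding pairs_compatible_def by auto
    moreover have "?c (Suc k) = block_conv n \<alpha> \<beta> (i0 + int k + 1) (j0 + int k + 1)"
      by (simp add: algebra_simps)
    ultimately have "p dvd (?c (Suc k) - ?c k)"
      by (simp only: block_conv_diagonal_step)
    with Suc have "p dvd (?c (Suc k) - ?c k) + (?c k - ?c 0)"
      by (intro dvd_add) auto
    then show ?case by simp
  qed simp
  show ?thesis
  proof (cases "j \<le> i")
    case True
    then show ?thesis
      using step[of "i - j" 0 "nat j"] assms by (simp add: conv_symbol_def)
  next
    case False
    then show ?thesis
      using step[of 0 "j - i" "nat i"] assms by (simp add: conv_symbol_def)
  qed
qed

lemma conv_symbol_nonneg_expand:
  assumes "n = Suc m" "0 \<le> k"
  shows "conv_symbol n \<alpha> \<beta> k = \<beta> 0 * \<alpha> k + (\<Sum>l<m. \<alpha> (k - (int l + 1)) * \<beta> (int l + 1))"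
  using assms(2) unfolding conv_symbol_def block_conv_def assms(1)
  by (subst sum.lessThan_Suc_shift) (simp add: algebra_simps)

lemma block_conv_last_column_expand:
  assumes "n = Suc m"
  shows "block_conv n \<alpha> \<beta> (k - 1) (int n - 1)
    = \<beta> 0 * \<alpha> (k - int n) + (\<Sum>l<m. \<alpha> (k - (int l + 1)) * \<beta> (int l + 1 - int n))"
  unfolding block_conv_def assms by (simp add: algebra_simps)

lemma sum_lessThan_mult_blocks:
  fixes g :: "nat \<Rightarrow> 'a::comm_monoid_add"
  shows "(\<Sum>t<n * d. g t) = (\<Sum>k<n. \<Sum>s<d. g (k * d + s))"
proof -
  have "(\<Sum>t<n * d. g t) = (\<Sum>k<n. sum g {k * d..<k * d + d})"
    by (rule sum.nat_group[symmetric])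
  also have "\<dots> = (\<Sum>k<n. \<Sum>s<d. g (k * d + s))"
  proof (rule sum.cong[OF refl])
    fix k
    have "sum g {k * d..<k * d + d} = (\<Sum>s=0..<d. g (s + k * d))"
      using sum.shift_bounds_nat_ivl[of g 0 "k * d" d] by (simp add: add.commute)
    then show "sum g {k * d..<k * d + d} = (\<Sum>s<d. g (k * d + s))"
      by (simp add: atLeast0LessThan add.commute)
  qed
  finally show ?thesis .
qed

lemma poly_toeplitz_mult:
  assumes M: "M \<in> carrier_mat d d"
  shows "poly_toeplitz n d M \<alpha> * poly_toeplitz n d M \<beta> = mat (n * d) (n * d)
    (\<lambda>(r, c). mat_poly_eval d M (block_conv n \<alpha> \<beta> (int (r div d)) (int (c div d))) $$ (r mod d, c mod d))"
    (is "?A * ?B = ?C")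
proof (rule eq_matI)
  fix r c
  assume "r < dim_row ?C" "c < dim_col ?C"
  then have rc: "r < n * d" "c < n * d" by auto
  then have rc_mod: "r mod d < d" "c mod d < d" by (simp_all add: mod_less_of_less_mult)
  define i where "i = int (r div d)"
  define j where "j = int (c div d)"
  have "(?A * ?B) $$ (r, c) = (\<Sum>t<n * d. ?A $$ (r, t) * ?B $$ (t, c))"
    using rc by (simp add: poly_toeplitz_def scalar_prod_def atLeast0LessThan)
  also have "\<dots> = (\<Sum>k<n. \<Sum>s<d. ?A $$ (r, k * d + s) * ?B $$ (k * d + s, c))"
    by (rule sum_lessThan_mult_blocks)
  also have "\<dots> = (\<Sum>k<n. \<Sum>s<d. mat_poly_eval d M (\<alpha> (i - int k)) $$ (r mod d, s)
      * mat_poly_eval d M (\<beta> (int k - j)) $$ (s, c mod d))"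
    using rc by (intro sum.cong refl)
      (simp add: poly_toeplitz_def index_block_toeplitz block_offset_less i_def j_def)
  also have "\<dots> = (\<Sum>k<n. (mat_poly_eval d M (\<alpha> (i - int k)) * mat_poly_eval d M (\<beta> (int k - j)))
      $$ (r mod d, c mod d))"
    using rc_mod M by (simp add: scalar_prod_def atLeast0LessThan)
  also have "\<dots> = mat_poly_eval d M (block_conv n \<alpha> \<beta> i j) $$ (r mod d, c mod d)"
    unfolding block_conv_def using rc_mod M
    by (simp add: index_mat_poly_eval_sum mat_poly_eval_mult)
  finally show "(?A * ?B) $$ (r, c) = ?C $$ (r, c)"
    using rc by (simp add: i_def j_def)
qed (auto simp: poly_toeplitz_def)

lemma poly_toeplitz_mult_compatible:
  assumes M: "M \<in> carrier_mat d d" and min_poly: "is_min_poly d M p"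
    and compat: "pairs_compatible p n \<alpha> \<beta>"
  shows "poly_toeplitz n d M \<alpha> * poly_toeplitz n d M \<beta> = poly_toeplitz n d M (conv_symbol n \<alpha> \<beta>)"
  unfolding poly_toeplitz_mult[OF M]
proof (rule eq_matI)
  fix r c
  assume "r < dim_row (poly_toeplitz n d M (conv_symbol n \<alpha> \<beta>))"
    "c < dim_col (poly_toeplitz n d M (conv_symbol n \<alpha> \<beta>))"
  then have rc: "r < n * d" "c < n * d" by (auto simp: poly_toeplitz_def)
  then have "r div d < n" "c div d < n" by (simp_all add: less_mult_imp_div_less)
  then have "p dvd (block_conv n \<alpha> \<beta> (int (r div d)) (int (c div d))
      - conv_symbol n \<alpha> \<beta> (int (r div d) - int (c div d)))"
    by (intro block_conv_diagonal_dvd[OF compat]) auto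
  then have "mat_poly_eval d M (block_conv n \<alpha> \<beta> (int (r div d)) (int (c div d)))
      = mat_poly_eval d M (conv_symbol n \<alpha> \<beta> (int (r div d) - int (c div d)))"
    unfolding mat_poly_eval_eq_iff[OF M min_poly] .
  then show "mat (n * d) (n * d) (\<lambda>(r, c). mat_poly_eval d M (block_conv n \<alpha> \<beta> (int (r div d)) (int (c div d)))
      $$ (r mod d, c mod d)) $$ (r, c) = poly_toeplitz n d M (conv_symbol n \<alpha> \<beta>) $$ (r, c)"
    using rc by (simp add: poly_toeplitz_def index_block_toeplitz)
qed (auto simp: poly_toeplitz_def)

text \<open>Conversely, comparing the blocks \<open>(i + 1, j + 1)\<close> and \<open>(i, j)\<close> of a Toeplitz product
  recovers every determinant condition.\<close>
lemma pairs_compatible_if_mult_toeplitz: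
  assumes M: "M \<in> carrier_mat d d" and min_poly: "is_min_poly d M p"
    and prod: "poly_toeplitz n d M \<alpha> * poly_toeplitz n d M \<beta> \<in> toeplitz_set n d M"
  shows "pairs_compatible p n \<alpha> \<beta>"
  unfolding pairs_compatible_def
proof (intro allI impI)
  fix a c :: int
  assume ac: "1 \<le> a \<and> a \<le> int n - 1 \<and> 1 \<le> c \<and> c \<le> int n - 1"
  obtain \<gamma> where \<gamma>: "poly_toeplitz n d M \<alpha> * poly_toeplitz n d M \<beta> = poly_toeplitz n d M \<gamma>"
    using prod unfolding toeplitz_set_eq by auto
  have block: "mat_poly_eval d M (block_conv n \<alpha> \<beta> (int i) (int j)) = mat_poly_eval d M (\<gamma> (int i - int j))"
    if "i < n" "j < n" for i j
  proof (rule eq_matI)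
    fix x y
    assume "x < dim_row (mat_poly_eval d M (\<gamma> (int i - int j)))"
      "y < dim_col (mat_poly_eval d M (\<gamma> (int i - int j)))"
    then have "x < d" "y < d" using M by auto
    then show "mat_poly_eval d M (block_conv n \<alpha> \<beta> (int i) (int j)) $$ (x, y)
        = mat_poly_eval d M (\<gamma> (int i - int j)) $$ (x, y)"
      using arg_cong[OF \<gamma>, of "\<lambda>A. A $$ (i * d + x, j * d + y)"] that
      by (simp add: poly_toeplitz_mult[OF M] index_poly_toeplitz block_offset_less)
  qed (use M in auto)
  define i where "i = nat (a - 1)"
  define j where "j = nat (int n - 1 - c)"
  have ij: "i + 1 < n" "j + 1 < n" using ac by (auto simp: i_def j_def)
  have "mat_poly_eval d M (block_conv n \<alpha> \<beta> (int i + 1) (int j + 1))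
      = mat_poly_eval d M (block_conv n \<alpha> \<beta> (int i) (int j))"
    using block[of "i + 1" "j + 1"] block[of i j] ij by (simp add: add.commute)
  then have "p dvd pair_det (block_pair n \<alpha> (int i + 1)) (block_pair n \<beta> (int n - 1 - int j))"
    unfolding mat_poly_eval_eq_iff[OF M min_poly] block_conv_diagonal_step .
  moreover have "int i + 1 = a" "int n - 1 - int j = c" using ac by (auto simp: i_def j_def)
  ultimately show "p dvd pair_det (block_pair n \<alpha> a) (block_pair n \<beta> c)" by simp
qed

section \<open>Ideals and coprimality of polynomials\<close>

lemma Gcd_insert_mem_ideal:
  fixes J :: "'a::euclidean_ring_gcd set"
  assumes "p \<in> J" "p \<noteq> 0"
    and add: "\<And>x y. x \<in> J \<Longrightarrow> y \<in> J \<Longrightarrow> x + y \<in> J"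
    and mult: "\<And>r x. x \<in> J \<Longrightarrow> r * x \<in> J"
  shows "Gcd (insert p J) \<in> J"
proof -
  obtain g where g: "g \<in> J" "g \<noteq> 0"
    and least: "\<And>y. y \<in> J \<Longrightarrow> y \<noteq> 0 \<Longrightarrow> euclidean_size g \<le> euclidean_size y"
    using ex_has_least_nat[of "\<lambda>x. x \<in> J \<and> x \<noteq> 0" p euclidean_size] assms(1,2) by blast
  have "g dvd x" if "x \<in> J" for x
  proof (rule ccontr)
    assume "\<not> g dvd x"
    then have "x mod g \<noteq> 0" by (simp add: mod_eq_0_iff_dvd)
    moreover have "x mod g \<in> J"
      using add[OF that mult[OF g(1), of "- (x div g)"]] by (simp add: minus_div_mult_eq_mod)
    ultimately show False
      using least mod_size_less[OF g(2), of x] by fastforce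
  qed
  then have "g dvd Gcd (insert p J)"
    using assms(1) by (auto intro: Gcd_greatest)
  then obtain k where "Gcd (insert p J) = g * k" by (rule dvdE)
  then show ?thesis
    using mult[OF g(1), of k] by (simp add: mult.commute)
qed

lemma coprime_if_no_common_root:
  fixes a p :: "complex poly"
  assumes "p \<noteq> 0" and no_common_root: "\<And>z. poly p z = 0 \<Longrightarrow> poly a z \<noteq> 0"
  shows "coprime a p"
proof (rule ccontr)
  assume "\<not> coprime a p"
  then have "\<not> is_unit (gcd a p)" by (metis is_unit_gcd)
  moreover have "gcd a p \<noteq> 0" using assms(1) by simp
  ultimately have "\<not> constant (poly (gcd a p))"
    using assms(1) by (simp add: constant_degree is_unit_iff_degree)
  then obtain z where "poly (gcd a p) z = 0" using fundamental_theorem_of_algebra by blast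
  moreover obtain k l where "a = gcd a p * k" "p = gcd a p * l"
    by (metis dvd_def gcd_dvd1 gcd_dvd2)
  ultimately have "poly a z = 0" "poly p z = 0" by (metis mult_zero_left poly_mult)+
  with no_common_root show False by blast
qed

text \<open>Only finitely many \<open>c\<close> make either polynomial vanish at a root of \<open>p\<close>.\<close>
lemma exists_coprime_shifts:
  fixes p r t :: "complex poly"
  assumes "p \<noteq> 0"
  shows "\<exists>c. coprime (1 + [:c:] * r) p \<and> coprime (t + [:c:]) p"
proof -
  let ?roots = "{z. poly p z = 0}"
  have "finite ((\<lambda>z. - poly t z) ` ?roots \<union> (\<lambda>z. - 1 / poly r z) ` ?roots)"
    using poly_roots_finite[OF assms] by simp
  then obtain c where c: "c \<notin> (\<lambda>z. - poly t z) ` ?roots \<union> (\<lambda>z. - 1 / poly r z) ` ?roots"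
    using ex_new_if_finite[OF infinite_UNIV_char_0] by blast
  have "poly (1 + [:c:] * r) z \<noteq> 0" if "poly p z = 0" for z
  proof
    assume "poly (1 + [:c:] * r) z = 0"
    then have "1 + c * poly r z = 0" by simp
    moreover from this have "poly r z \<noteq> 0" by auto
    ultimately have "c = - 1 / poly r z"
      by (simp add: field_simps eq_neg_iff_add_eq_0 add.commute)
    with c that show False by blast
  qed
  moreover have "poly (t + [:c:]) z \<noteq> 0" if "poly p z = 0" for z
  proof
    assume "poly (t + [:c:]) z = 0"
    then have "c = - poly t z" by (simp add: algebra_simps eq_neg_iff_add_eq_0)
    with c that show False by blast
  qed
  ultimately show ?thesis
    using coprime_if_no_common_root[OF assms] by blast
qed

section \<open>Modules of block pairs\<close>

text \<open>The \<open>R\<close>-submodule of \<open>R\<^sup>2\<close> generated by \<open>G\<close>, saturated under congruence modulo \<open>p\<close>;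
  for \<open>R = \<complex>[X]\<close> it models a submodule of \<open>P(M)\<^sup>2\<close>.\<close>
inductive_set pair_module :: "'a::comm_ring_1 \<Rightarrow> ('a \<times> 'a) set \<Rightarrow> ('a \<times> 'a) set"
  for p G where
  generator: "v \<in> G \<Longrightarrow> v \<in> pair_module p G"
| zero: "(0, 0) \<in> pair_module p G"
| add: "(a, b) \<in> pair_module p G \<Longrightarrow> (c, e) \<in> pair_module p G \<Longrightarrow> (a + c, b + e) \<in> pair_module p G"
| scale: "(a, b) \<in> pair_module p G \<Longrightarrow> (r * a, r * b) \<in> pair_module p G"
| congruent: "(a, b) \<in> pair_module p G \<Longrightarrow> p dvd (a' - a) \<Longrightarrow> p dvd (b' - b) \<Longrightarrow> (a', b') \<in> pair_module p G"

lemma pair_module_sum: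
  assumes "finite L" "\<And>l. l \<in> L \<Longrightarrow> (f l, g l) \<in> pair_module p G"
  shows "(\<Sum>l\<in>L. f l, \<Sum>l\<in>L. g l) \<in> pair_module p G"
  using assms by (induct L rule: finite_induct) (auto intro: pair_module.zero pair_module.add)

lemma pair_det_swap: "pair_det w v = - pair_det v w"
  by (simp add: pair_det_def algebra_simps)

lemma pair_module_det_dvd_right:
  assumes "\<And>w. w \<in> G \<Longrightarrow> p dvd pair_det v w" and "w \<in> pair_module p G"
  shows "p dvd pair_det v w"
  using assms(2)
proof (induct w rule: pair_module.induct)
  case (add a b c e)
  have "pair_det v (a + c, b + e) = pair_det v (a, b) + pair_det v (c, e)"
    by (simp add: pair_det_def algebra_simps)
  with add show ?case by simp
next
  case (scale a b r)
  have "pair_det v (r * a, r * b) = r * pair_det v (a, b)"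
    by (simp add: pair_det_def algebra_simps)
  with scale show ?case by simp
next
  case (congruent a b a' b')
  have "pair_det v (a', b') = pair_det v (a, b) + fst v * (b' - b) - snd v * (a' - a)"
    by (simp add: pair_det_def algebra_simps)
  with congruent show ?case by simp
next
  case (generator w)
  then show ?case by (rule assms(1))
qed (simp add: pair_det_def)

lemma pair_module_det_dvd:
  assumes G: "\<And>v w. v \<in> G \<Longrightarrow> w \<in> G \<Longrightarrow> p dvd pair_det v w"
    and v: "v \<in> pair_module p G" and w: "w \<in> pair_module p G"
  shows "p dvd pair_det v w"
proof -
  have "p dvd pair_det w u" if "u \<in> G" for u
  proof -
    have "p dvd pair_det u w"
      using pair_module_det_dvd_right[OF G[OF that] w] .
    then show ?thesis by (simp add: pair_det_swap[of w u])
  qed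
  then have "p dvd pair_det w v"
    using pair_module_det_dvd_right[OF _ v] by blast
  then show ?thesis by (simp add: pair_det_swap[of v w])
qed

lemma block_pair_conv_symbol_mem:
  assumes compat: "pairs_compatible p n \<alpha> \<beta>"
    and \<alpha>: "\<And>a. 1 \<le> a \<Longrightarrow> a \<le> int n - 1 \<Longrightarrow> block_pair n \<alpha> a \<in> pair_module p G"
    and \<beta>: "\<And>a. 1 \<le> a \<Longrightarrow> a \<le> int n - 1 \<Longrightarrow> block_pair n \<beta> a \<in> pair_module p G"
    and k: "1 \<le> k" "k \<le> int n - 1"
  shows "block_pair n (conv_symbol n \<alpha> \<beta>) k \<in> pair_module p G"
proof -
  obtain m where n: "n = Suc m" using k by (cases n) auto
  let ?s = "\<Sum>l<m. \<alpha> (k - (int l + 1)) * \<beta> (int l + 1)"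
    and ?t = "\<Sum>l<m. \<alpha> (k - (int l + 1)) * \<beta> (int l + 1 - int n)"
  have "(\<beta> 0 * \<alpha> k, \<beta> 0 * \<alpha> (k - int n)) \<in> pair_module p G"
    using \<alpha>[OF k] by (auto simp: block_pair_def intro: pair_module.scale)
  moreover have "(?s, ?t) \<in> pair_module p G"
  proof (rule pair_module_sum)
    fix l
    assume "l \<in> {..<m}"
    then have "(\<beta> (int l + 1), \<beta> (int l + 1 - int n)) \<in> pair_module p G"
      using \<beta>[of "int l + 1"] n by (simp add: block_pair_def)
    then show "(\<alpha> (k - (int l + 1)) * \<beta> (int l + 1), \<alpha> (k - (int l + 1)) * \<beta> (int l + 1 - int n))
        \<in> pair_module p G"
      by (rule pair_module.scale)
  qed simp
  ultimately have sum: "(\<beta> 0 * \<alpha> k + ?s, \<beta> 0 * \<alpha> (k - int n) + ?t) \<in> pair_module p G"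
    by (rule pair_module.add)
  have "p dvd (block_conv n \<alpha> \<beta> (k - 1) (int n - 1) - conv_symbol n \<alpha> \<beta> (k - int n))"
    using block_conv_diagonal_dvd[OF compat, of "k - 1" "int n - 1"] k by simp
  then have "p dvd - (block_conv n \<alpha> \<beta> (k - 1) (int n - 1) - conv_symbol n \<alpha> \<beta> (k - int n))"
    by (simp only: dvd_minus_iff)
  then have "p dvd (conv_symbol n \<alpha> \<beta> (k - int n) - (\<beta> 0 * \<alpha> (k - int n) + ?t))"
    by (simp only: block_conv_last_column_expand[OF n] minus_diff_eq)
  then show ?thesis
    using pair_module.congruent[OF sum] k by (simp add: block_pair_def conv_symbol_nonneg_expand[OF n])
qed

definition toeplitz_with_pairs ::
  "nat \<Rightarrow> nat \<Rightarrow> complex mat \<Rightarrow> (complex poly \<times> complex poly) set \<Rightarrow> complex mat set" where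
  "toeplitz_with_pairs n d M N =
    {poly_toeplitz n d M \<alpha> | \<alpha>. \<forall>a. 1 \<le> a \<and> a \<le> int n - 1 \<longrightarrow> block_pair n \<alpha> a \<in> N}"

lemma toeplitz_with_pairs_subset: "toeplitz_with_pairs n d M N \<subseteq> toeplitz_set n d M"
  unfolding toeplitz_with_pairs_def toeplitz_set_eq by blast

lemma toeplitz_with_pairs_mult_closed:
  assumes M: "M \<in> carrier_mat d d" and min_poly: "is_min_poly d M p"
    and G: "\<And>v w. v \<in> G \<Longrightarrow> w \<in> G \<Longrightarrow> p dvd pair_det v w"
    and "A \<in> toeplitz_with_pairs n d M (pair_module p G)" "B \<in> toeplitz_with_pairs n d M (pair_module p G)"
  shows "A * B \<in> toeplitz_with_pairs n d M (pair_module p G)"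
proof -
  obtain \<alpha> \<beta> where A: "A = poly_toeplitz n d M \<alpha>" and B: "B = poly_toeplitz n d M \<beta>"
    and \<alpha>: "\<And>a. 1 \<le> a \<Longrightarrow> a \<le> int n - 1 \<Longrightarrow> block_pair n \<alpha> a \<in> pair_module p G"
    and \<beta>: "\<And>a. 1 \<le> a \<Longrightarrow> a \<le> int n - 1 \<Longrightarrow> block_pair n \<beta> a \<in> pair_module p G"
    using assms(4,5) unfolding toeplitz_with_pairs_def by blast
  have compat: "pairs_compatible p n \<alpha> \<beta>"
    unfolding pairs_compatible_def using pair_module_det_dvd[OF G] \<alpha> \<beta> by simp
  then have "A * B = poly_toeplitz n d M (conv_symbol n \<alpha> \<beta>)"
    unfolding A B by (rule poly_toeplitz_mult_compatible[OF M min_poly])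
  then show ?thesis
    using block_pair_conv_symbol_mem[OF compat \<alpha> \<beta>] unfolding toeplitz_with_pairs_def by blast
qed

lemma toeplitz_with_pairs_subalgebra:
  assumes M: "M \<in> carrier_mat d d" and min_poly: "is_min_poly d M p"
    and G: "\<And>v w. v \<in> G \<Longrightarrow> w \<in> G \<Longrightarrow> p dvd pair_det v w"
  shows "is_subalgebra (n * d) (toeplitz_with_pairs n d M (pair_module p G))"
  unfolding is_subalgebra_def
proof (intro conjI ballI allI)
  let ?T = "toeplitz_with_pairs n d M (pair_module p G)"
  show "?T \<subseteq> carrier_mat (n * d) (n * d)"
    unfolding toeplitz_with_pairs_def poly_toeplitz_def by auto
  show "0\<^sub>m (n * d) (n * d) \<in> ?T"
    unfolding toeplitz_with_pairs_def
    by (auto simp: poly_toeplitz_zero[symmetric] block_pair_def intro!: exI[of _ "\<lambda>_. 0"] pair_module.zero)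
  fix A B
  assume "A \<in> ?T" "B \<in> ?T"
  then show "A * B \<in> ?T"
    using toeplitz_with_pairs_mult_closed[OF M min_poly G] by blast
  from \<open>A \<in> ?T\<close> \<open>B \<in> ?T\<close> obtain \<alpha> \<beta> where A: "A = poly_toeplitz n d M \<alpha>" and B: "B = poly_toeplitz n d M \<beta>"
    and \<alpha>: "\<And>a. 1 \<le> a \<Longrightarrow> a \<le> int n - 1 \<Longrightarrow> block_pair n \<alpha> a \<in> pair_module p G"
    and \<beta>: "\<And>a. 1 \<le> a \<Longrightarrow> a \<le> int n - 1 \<Longrightarrow> block_pair n \<beta> a \<in> pair_module p G"
    unfolding toeplitz_with_pairs_def by blast
  have "A + B = poly_toeplitz n d M (\<lambda>m. \<alpha> m + \<beta> m)"
    unfolding A B by (rule poly_toeplitz_add[OF M])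
  moreover have "block_pair n (\<lambda>m. \<alpha> m + \<beta> m) a \<in> pair_module p G" if "1 \<le> a" "a \<le> int n - 1" for a
    using pair_module.add[of "\<alpha> a" "\<alpha> (a - int n)"] \<alpha>[OF that] \<beta>[OF that] by (simp add: block_pair_def)
  ultimately show "A + B \<in> ?T"
    unfolding toeplitz_with_pairs_def by blast
next
  fix c and A
  assume "A \<in> toeplitz_with_pairs n d M (pair_module p G)"
  then obtain \<alpha> where A: "A = poly_toeplitz n d M \<alpha>"
    and \<alpha>: "\<And>a. 1 \<le> a \<Longrightarrow> a \<le> int n - 1 \<Longrightarrow> block_pair n \<alpha> a \<in> pair_module p G"
    unfolding toeplitz_with_pairs_def by blast
  have "c \<cdot>\<^sub>m A = poly_toeplitz n d M (\<lambda>m. [:c:] * \<alpha> m)"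
    unfolding A by (rule poly_toeplitz_smult[OF M])
  moreover have "block_pair n (\<lambda>m. [:c:] * \<alpha> m) a \<in> pair_module p G" if "1 \<le> a" "a \<le> int n - 1" for a
    using pair_module.scale[OF \<alpha>[OF that, unfolded block_pair_def], of "[:c:]"]
    by (simp only: block_pair_def)
  ultimately show "c \<cdot>\<^sub>m A \<in> toeplitz_with_pairs n d M (pair_module p G)"
    unfolding toeplitz_with_pairs_def by blast
qed

definition pair_symbol :: "nat \<Rightarrow> int \<Rightarrow> 'a \<times> 'a \<Rightarrow> int \<Rightarrow> 'a::zero" where
  "pair_symbol n a v m = (if m = a then fst v else if m = a - int n then snd v else 0)"

definition constant_pair_symbol :: "nat \<Rightarrow> 'a \<times> 'a \<Rightarrow> int \<Rightarrow> 'a::zero" where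
  "constant_pair_symbol n v m =
    (if 1 \<le> m \<and> m \<le> int n - 1 then fst v else if 1 - int n \<le> m \<and> m \<le> - 1 then snd v else 0)"

lemma poly_toeplitz_pair_symbol_mem:
  assumes "v \<in> pair_module p G" "1 \<le> a" "a \<le> int n - 1"
  shows "poly_toeplitz n d M (pair_symbol n a v) \<in> toeplitz_with_pairs n d M (pair_module p G)"
proof -
  have "block_pair n (pair_symbol n a v) a' \<in> pair_module p G" if "1 \<le> a'" "a' \<le> int n - 1" for a'
    using assms that pair_module.zero
    by (cases "a' = a") (auto simp: block_pair_def pair_symbol_def)
  then show ?thesis unfolding toeplitz_with_pairs_def by blast
qed

lemma poly_toeplitz_constant_pair_symbol_mem:
  assumes "v \<in> pair_module p G"
  shows "poly_toeplitz n d M (constant_pair_symbol n v) \<in> toeplitz_with_pairs n d M (pair_module p G)"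
  using assms unfolding toeplitz_with_pairs_def
  by (auto simp: block_pair_def constant_pair_symbol_def intro!: exI[of _ "constant_pair_symbol n v"])

lemma Gcd_fst_pair_module_mem:
  fixes p :: "'a::euclidean_ring_gcd"
  assumes "p \<noteq> 0"
  shows "Gcd (insert p (fst ` pair_module p G)) \<in> fst ` pair_module p G"
proof (rule Gcd_insert_mem_ideal[OF _ assms])
  show "p \<in> fst ` pair_module p G"
  proof (rule rev_image_eqI)
    show "(p, 0) \<in> pair_module p G" by (rule pair_module.congruent[OF pair_module.zero]) simp_all
  qed simp
next
  fix x y
  assume "x \<in> fst ` pair_module p G" "y \<in> fst ` pair_module p G"
  then obtain x' y' where "(x, x') \<in> pair_module p G" "(y, y') \<in> pair_module p G" by force
  then show "x + y \<in> fst ` pair_module p G"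
    by (rule rev_image_eqI[OF pair_module.add]) simp
next
  fix r x
  assume "x \<in> fst ` pair_module p G"
  then obtain x' where "(x, x') \<in> pair_module p G" by force
  then show "r * x \<in> fst ` pair_module p G"
    by (rule rev_image_eqI[OF pair_module.scale[where r = r]]) simp
qed

lemma Gcd_snd_pair_module_mem:
  fixes p :: "'a::euclidean_ring_gcd"
  assumes "p \<noteq> 0"
  shows "Gcd (insert p (snd ` pair_module p G)) \<in> snd ` pair_module p G"
proof (rule Gcd_insert_mem_ideal[OF _ assms])
  show "p \<in> snd ` pair_module p G"
  proof (rule rev_image_eqI)
    show "(0, p) \<in> pair_module p G" by (rule pair_module.congruent[OF pair_module.zero]) simp_all
  qed simp
next
  fix x y
  assume "x \<in> snd ` pair_module p G" "y \<in> snd ` pair_module p G"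
  then obtain x' y' where "(x', x) \<in> pair_module p G" "(y', y) \<in> pair_module p G" by force
  then show "x + y \<in> snd ` pair_module p G"
    by (rule rev_image_eqI[OF pair_module.add]) simp
next
  fix r x
  assume "x \<in> snd ` pair_module p G"
  then obtain x' where "(x', x) \<in> pair_module p G" by force
  then show "r * x \<in> snd ` pair_module p G"
    by (rule rev_image_eqI[OF pair_module.scale[where r = r]]) simp
qed

section \<open>Maximal subalgebras\<close>

locale maximal_toeplitz_algebra =
  fixes n d :: nat and M :: "complex mat" and p :: "complex poly" and S :: "complex mat set"
  assumes n_ge_2: "n \<ge> 2"
    and M_carrier: "M \<in> carrier_mat d d"
    and min_poly: "is_min_poly d M p"
    and maximal: "maximal_subalgebra_in (n * d) (toeplitz_set n d M) S"
begin

lemma p_nonzero: "p \<noteq> 0"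
  using min_poly unfolding is_min_poly_def by auto

definition upper_entries :: "complex poly set" where
  "upper_entries = {\<alpha> a | \<alpha> a. poly_toeplitz n d M \<alpha> \<in> S \<and> 1 \<le> a \<and> a \<le> int n - 1}"

text \<open>Besides the block pairs of \<open>S\<close>, the generators contain \<open>(0, p / g)\<close> with \<open>g\<close> the
  gcd of \<open>p\<close> and the upper entries; it is compatible with every block pair because \<open>g\<close> divides
  their first components, and it is what forces \<open>s\<^sub>+ s\<^sub>-\<close> to divide \<open>p\<close>.\<close>
definition generators :: "(complex poly \<times> complex poly) set" where
  "generators = {block_pair n \<alpha> a | \<alpha> a. poly_toeplitz n d M \<alpha> \<in> S \<and> 1 \<le> a \<and> a \<le> int n - 1}
     \<union> {(0, p div Gcd (insert p upper_entries))}"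

abbreviation pairs :: "(complex poly \<times> complex poly) set" where
  "pairs \<equiv> pair_module p generators"

lemma S_subalgebra: "is_subalgebra (n * d) S"
  and S_subset_toeplitz: "S \<subseteq> toeplitz_set n d M"
  using maximal unfolding maximal_subalgebra_in_def by blast+

lemma mem_S_poly_toeplitz:
  assumes "X \<in> S"
  obtains \<alpha> where "X = poly_toeplitz n d M \<alpha>"
  using assms S_subset_toeplitz unfolding toeplitz_set_eq by blast

lemma generators_det_dvd:
  assumes "v \<in> generators" "w \<in> generators"
  shows "p dvd pair_det v w"
proof -
  let ?q = "p div Gcd (insert p upper_entries)"
  have upper: "p dvd pair_det (block_pair n \<alpha> a) (0, ?q)" "p dvd pair_det (0, ?q) (block_pair n \<alpha> a)"
    if "\<alpha> a \<in> upper_entries" for \<alpha> a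
  proof -
    have "Gcd (insert p upper_entries) dvd \<alpha> a" using that by (intro Gcd_dvd) simp
    then have "Gcd (insert p upper_entries) * ?q dvd \<alpha> a * ?q" by (rule mult_dvd_mono) simp
    moreover have "Gcd (insert p upper_entries) * ?q = p"
      by (intro dvd_mult_div_cancel Gcd_dvd) simp
    ultimately have "p dvd \<alpha> a * ?q" by simp
    then show "p dvd pair_det (block_pair n \<alpha> a) (0, ?q)" "p dvd pair_det (0, ?q) (block_pair n \<alpha> a)"
      by (simp_all add: pair_det_def block_pair_def mult.commute)
  qed
  have compat: "p dvd pair_det (block_pair n \<alpha> a) (block_pair n \<beta> c)"
    if "poly_toeplitz n d M \<alpha> \<in> S" "1 \<le> a" "a \<le> int n - 1"
      "poly_toeplitz n d M \<beta> \<in> S" "1 \<le> c" "c \<le> int n - 1" for \<alpha> \<beta> a c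
  proof -
    have "poly_toeplitz n d M \<alpha> * poly_toeplitz n d M \<beta> \<in> toeplitz_set n d M"
      using that S_subalgebra S_subset_toeplitz unfolding is_subalgebra_def by blast
    then show ?thesis
      using pairs_compatible_if_mult_toeplitz[OF M_carrier min_poly] that
      unfolding pairs_compatible_def by blast
  qed
  have "\<alpha> a \<in> upper_entries" if "poly_toeplitz n d M \<alpha> \<in> S" "1 \<le> a" "a \<le> int n - 1" for \<alpha> a
    using that unfolding upper_entries_def by blast
  then show ?thesis
    using assms compat upper unfolding generators_def by (auto simp del: Gcd_insert simp: pair_det_def)
qed

text \<open>Never use this as a rewrite rule: \<open>pairs\<close> depends on \<open>S\<close> through the generators.\<close>
lemma S_eq_toeplitz_with_pairs: "S = toeplitz_with_pairs n d M pairs"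
proof -
  have "S \<subseteq> toeplitz_with_pairs n d M pairs"
  proof
    fix X
    assume "X \<in> S"
    then obtain \<alpha> where "X = poly_toeplitz n d M \<alpha>" by (rule mem_S_poly_toeplitz)
    moreover have "block_pair n \<alpha> a \<in> pairs" if "1 \<le> a" "a \<le> int n - 1" for a
      using \<open>X \<in> S\<close> calculation that by (auto simp: generators_def intro: pair_module.generator)
    ultimately show "X \<in> toeplitz_with_pairs n d M pairs"
      unfolding toeplitz_with_pairs_def by blast
  qed
  then show ?thesis
    using maximal toeplitz_with_pairs_subset
      toeplitz_with_pairs_subalgebra[OF M_carrier min_poly generators_det_dvd]
    unfolding maximal_subalgebra_in_def by blast
qed

lemma mem_S_block_pairs:
  assumes "X \<in> S"
  obtains \<alpha> where "X = poly_toeplitz n d M \<alpha>"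
    and "\<And>a. 1 \<le> a \<Longrightarrow> a \<le> int n - 1 \<Longrightarrow> block_pair n \<alpha> a \<in> pairs"
proof -
  from assms obtain \<alpha> where "X = poly_toeplitz n d M \<alpha>"
    and "\<forall>a. 1 \<le> a \<and> a \<le> int n - 1 \<longrightarrow> block_pair n \<alpha> a \<in> pairs"
    using S_eq_toeplitz_with_pairs[THEN equalityD1] unfolding toeplitz_with_pairs_def by blast
  then show ?thesis using that by blast
qed

lemma poly_toeplitz_pair_symbol_mem_S:
  "v \<in> pairs \<Longrightarrow> 1 \<le> a \<Longrightarrow> a \<le> int n - 1 \<Longrightarrow> poly_toeplitz n d M (pair_symbol n a v) \<in> S"
  using subsetD[OF S_eq_toeplitz_with_pairs[THEN equalityD2] poly_toeplitz_pair_symbol_mem] .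

lemma poly_toeplitz_constant_pair_symbol_mem_S:
  "v \<in> pairs \<Longrightarrow> poly_toeplitz n d M (constant_pair_symbol n v) \<in> S"
  using subsetD[OF S_eq_toeplitz_with_pairs[THEN equalityD2] poly_toeplitz_constant_pair_symbol_mem] .

lemma upper_block_polys:
  assumes j: "1 \<le> j" "j \<le> int n - 1"
  shows "{b. \<exists>X\<in>S. mat_poly_eval d M b = toeplitz_block d X j} = fst ` pairs"
proof (intro equalityI subsetI)
  fix b
  assume "b \<in> {b. \<exists>X\<in>S. mat_poly_eval d M b = toeplitz_block d X j}"
  then obtain X where "X \<in> S" and b: "mat_poly_eval d M b = toeplitz_block d X j" by blast
  from \<open>X \<in> S\<close> obtain \<alpha> where X: "X = poly_toeplitz n d M \<alpha>"
    and \<alpha>: "\<And>a. 1 \<le> a \<Longrightarrow> a \<le> int n - 1 \<Longrightarrow> block_pair n \<alpha> a \<in> pairs"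
    by (rule mem_S_block_pairs) blast
  have "p dvd (b - \<alpha> j)"
    using b j unfolding X by (simp add: M_carrier mat_poly_eval_eq_iff[OF M_carrier min_poly])
  then have "(b, \<alpha> (j - int n)) \<in> pairs"
    using pair_module.congruent[OF \<alpha>[OF j, unfolded block_pair_def]] by simp
  then show "b \<in> fst ` pairs" by (rule rev_image_eqI) simp
next
  fix b
  assume "b \<in> fst ` pairs"
  then obtain v where "v \<in> pairs" "b = fst v" by blast
  then have "poly_toeplitz n d M (pair_symbol n j v) \<in> S"
    and "toeplitz_block d (poly_toeplitz n d M (pair_symbol n j v)) j = mat_poly_eval d M b"
    using poly_toeplitz_pair_symbol_mem_S j M_carrier by (auto simp: pair_symbol_def)
  then show "b \<in> {b. \<exists>X\<in>S. mat_poly_eval d M b = toeplitz_block d X j}" by force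
qed

lemma lower_block_polys:
  assumes j: "1 \<le> j" "j \<le> int n - 1"
  shows "{b. \<exists>X\<in>S. mat_poly_eval d M b = toeplitz_block d X (- j)} = snd ` pairs"
proof (intro equalityI subsetI)
  have a: "1 \<le> int n - j" "int n - j \<le> int n - 1" using j by auto
  fix b
  assume "b \<in> {b. \<exists>X\<in>S. mat_poly_eval d M b = toeplitz_block d X (- j)}"
  then obtain X where "X \<in> S" and b: "mat_poly_eval d M b = toeplitz_block d X (- j)" by blast
  from \<open>X \<in> S\<close> obtain \<alpha> where X: "X = poly_toeplitz n d M \<alpha>"
    and \<alpha>: "\<And>a. 1 \<le> a \<Longrightarrow> a \<le> int n - 1 \<Longrightarrow> block_pair n \<alpha> a \<in> pairs"
    by (rule mem_S_block_pairs) blast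
  have "p dvd (b - \<alpha> (- j))"
    using b j unfolding X by (simp add: M_carrier mat_poly_eval_eq_iff[OF M_carrier min_poly])
  then have "(\<alpha> (int n - j), b) \<in> pairs"
    using pair_module.congruent[OF \<alpha>[OF a, unfolded block_pair_def]] by simp
  then show "b \<in> snd ` pairs" by (rule rev_image_eqI) simp
next
  have a: "1 \<le> int n - j" "int n - j \<le> int n - 1" using j by auto
  fix b
  assume "b \<in> snd ` pairs"
  then obtain v where "v \<in> pairs" "b = snd v" by blast
  then have "poly_toeplitz n d M (pair_symbol n (int n - j) v) \<in> S"
    and "toeplitz_block d (poly_toeplitz n d M (pair_symbol n (int n - j) v)) (- j) = mat_poly_eval d M b"
    using poly_toeplitz_pair_symbol_mem_S[OF _ a] j M_carrier by (auto simp: pair_symbol_def)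
  then show "b \<in> {b. \<exists>X\<in>S. mat_poly_eval d M b = toeplitz_block d X (- j)}" by force
qed

definition s_plus :: "complex poly" where
  "s_plus = Gcd (insert p (fst ` pairs))"

definition s_minus :: "complex poly" where
  "s_minus = Gcd (insert p (snd ` pairs))"

lemma block_gcd_upper: "1 \<le> j \<Longrightarrow> j \<le> int n - 1 \<Longrightarrow> block_gcd d M p S j = s_plus"
  unfolding block_gcd_def s_plus_def by (simp only: upper_block_polys)

lemma block_gcd_lower: "1 \<le> j \<Longrightarrow> j \<le> int n - 1 \<Longrightarrow> block_gcd d M p S (- j) = s_minus"
  unfolding block_gcd_def s_minus_def by (simp only: lower_block_polys)

lemma s_plus_mem: "s_plus \<in> fst ` pairs"
  unfolding s_plus_def by (rule Gcd_fst_pair_module_mem[OF p_nonzero])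

lemma s_minus_mem: "s_minus \<in> snd ` pairs"
  unfolding s_minus_def by (rule Gcd_snd_pair_module_mem[OF p_nonzero])

lemma s_plus_dvd: "v \<in> pairs \<Longrightarrow> s_plus dvd fst v"
  unfolding s_plus_def by (rule Gcd_dvd) simp

lemma s_minus_dvd: "v \<in> pairs \<Longrightarrow> s_minus dvd snd v"
  unfolding s_minus_def by (rule Gcd_dvd) simp

lemma upper_block_factor:
  assumes "X \<in> S" "1 \<le> j" "j \<le> int n - 1"
  shows "\<exists>b. toeplitz_block d X j = mat_poly_eval d M s_plus * mat_poly_eval d M b"
proof -
  obtain \<alpha> where X: "X = poly_toeplitz n d M \<alpha>"
    and "\<And>a. 1 \<le> a \<Longrightarrow> a \<le> int n - 1 \<Longrightarrow> block_pair n \<alpha> a \<in> pairs"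
    using assms(1) by (rule mem_S_block_pairs) blast
  then have "s_plus dvd \<alpha> j"
    using s_plus_dvd assms(2,3) unfolding block_pair_def by fastforce
  then obtain b where "\<alpha> j = s_plus * b" ..
  then show ?thesis
    using assms X M_carrier by (auto simp: mat_poly_eval_mult)
qed

lemma lower_block_factor:
  assumes "X \<in> S" "1 \<le> j" "j \<le> int n - 1"
  shows "\<exists>b. toeplitz_block d X (- j) = mat_poly_eval d M s_minus * mat_poly_eval d M b"
proof -
  obtain \<alpha> where X: "X = poly_toeplitz n d M \<alpha>"
    and pairs: "\<And>a. 1 \<le> a \<Longrightarrow> a \<le> int n - 1 \<Longrightarrow> block_pair n \<alpha> a \<in> pairs"
    using assms(1) by (rule mem_S_block_pairs) blast
  have "s_minus dvd \<alpha> (int n - j - int n)"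
    using s_minus_dvd[OF pairs[of "int n - j"]] assms(2,3) by (simp add: block_pair_def)
  then obtain b where "\<alpha> (- j) = s_minus * b" by auto
  then show ?thesis
    using assms X M_carrier by (auto simp: mat_poly_eval_mult)
qed

text \<open>The witness is the constant symbol of \<open>(s\<^sub>+, t) + c (r, s\<^sub>-)\<close> for a generic constant \<open>c\<close>.\<close>
lemma exists_coprime_cofactors:
  "\<exists>A\<in>S. \<forall>j. 1 \<le> j \<and> j \<le> int n - 1 \<longrightarrow>
     (\<exists>a. toeplitz_block d A j = mat_poly_eval d M s_plus * mat_poly_eval d M a \<and> coprime a p) \<and>
     (\<exists>a. toeplitz_block d A (- j) = mat_poly_eval d M s_minus * mat_poly_eval d M a \<and> coprime a p)"
proof -
  obtain t r where t: "(s_plus, t) \<in> pairs" and r: "(r, s_minus) \<in> pairs"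
    using s_plus_mem s_minus_mem by force
  have "s_minus dvd t" "s_plus dvd r"
    using s_minus_dvd[OF t] s_plus_dvd[OF r] by simp_all
  then obtain t' r' where t': "t = s_minus * t'" and r': "r = s_plus * r'"
    by (auto elim!: dvdE)
  obtain c where c: "coprime (1 + [:c:] * r') p" "coprime (t' + [:c:]) p"
    using exists_coprime_shifts[OF p_nonzero] by blast
  define v where "v = (s_plus * (1 + [:c:] * r'), s_minus * (t' + [:c:]))"
  have "(s_plus + [:c:] * r, t + [:c:] * s_minus) \<in> pairs"
    by (rule pair_module.add[OF t pair_module.scale[OF r]])
  then have "v \<in> pairs"
    unfolding v_def t' r' by (simp add: algebra_simps)
  then have "poly_toeplitz n d M (constant_pair_symbol n v) \<in> S"
    by (rule poly_toeplitz_constant_pair_symbol_mem_S)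
  moreover have "toeplitz_block d (poly_toeplitz n d M (constant_pair_symbol n v)) j
      = mat_poly_eval d M s_plus * mat_poly_eval d M (1 + [:c:] * r')"
    "toeplitz_block d (poly_toeplitz n d M (constant_pair_symbol n v)) (- j)
      = mat_poly_eval d M s_minus * mat_poly_eval d M (t' + [:c:])"
    if "1 \<le> j" "j \<le> int n - 1" for j
    using that M_carrier by (simp_all add: constant_pair_symbol_def v_def mat_poly_eval_mult)
  ultimately show ?thesis
    using c by blast
qed

lemma s_plus_s_minus_dvd: "s_plus * s_minus dvd p"
proof -
  let ?g = "Gcd (insert p upper_entries)"
  have "(0, p div ?g) \<in> pairs"
    unfolding generators_def by (rule pair_module.generator) simp
  then have "s_minus dvd p div ?g"
    using s_minus_dvd by fastforce
  moreover have "upper_entries \<subseteq> fst ` pairs"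
  proof
    fix b
    assume "b \<in> upper_entries"
    then obtain \<alpha> a where "b = \<alpha> a" "poly_toeplitz n d M \<alpha> \<in> S" "1 \<le> a" "a \<le> int n - 1"
      unfolding upper_entries_def by blast
    then have "block_pair n \<alpha> a \<in> pairs" "b = fst (block_pair n \<alpha> a)"
      unfolding generators_def by (auto simp: block_pair_def intro: pair_module.generator)
    then show "b \<in> fst ` pairs" by (rule rev_image_eqI)
  qed
  then have "s_plus dvd ?g"
    using s_plus_dvd by (intro Gcd_greatest) (auto simp: s_plus_def simp del: Gcd_insert intro: Gcd_dvd)
  ultimately have "s_plus * s_minus dvd ?g * (p div ?g)"
    by (metis mult.commute mult_dvd_mono)
  also have "?g * (p div ?g) = p"
    by (intro dvd_mult_div_cancel Gcd_dvd) simp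
  finally show ?thesis .
qed

lemma generic_exists_pair_fst_not_dvd:
  assumes "generic_alg n d M S"
  shows "\<exists>v\<in>pairs. \<not> p dvd fst v"
proof (rule ccontr)
  assume "\<not> (\<exists>v\<in>pairs. \<not> p dvd fst v)"
  then have all: "\<And>v. v \<in> pairs \<Longrightarrow> p dvd fst v" by blast
  have "S \<subseteq> toeplitz_upper n d M"
  proof
    fix X
    assume "X \<in> S"
    then obtain \<alpha> where X: "X = poly_toeplitz n d M \<alpha>"
      and pairs: "\<And>a. 1 \<le> a \<Longrightarrow> a \<le> int n - 1 \<Longrightarrow> block_pair n \<alpha> a \<in> pairs"
      by (rule mem_S_block_pairs) blast
    have "p dvd \<alpha> m" if "1 \<le> m" "m < int n" for m
      using all[OF pairs[of m]] that by (simp add: block_pair_def)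
    then show "X \<in> toeplitz_upper n d M"
      unfolding X by (rule poly_toeplitz_mem_toeplitz_upper[OF M_carrier min_poly])
  qed
  with assms show False unfolding generic_alg_def by blast
qed

lemma generic_exists_pair_snd_not_dvd:
  assumes "generic_alg n d M S"
  shows "\<exists>v\<in>pairs. \<not> p dvd snd v"
proof (rule ccontr)
  assume "\<not> (\<exists>v\<in>pairs. \<not> p dvd snd v)"
  then have all: "\<And>v. v \<in> pairs \<Longrightarrow> p dvd snd v" by blast
  have "S \<subseteq> toeplitz_lower n d M"
  proof
    fix X
    assume "X \<in> S"
    then obtain \<alpha> where X: "X = poly_toeplitz n d M \<alpha>"
      and pairs: "\<And>a. 1 \<le> a \<Longrightarrow> a \<le> int n - 1 \<Longrightarrow> block_pair n \<alpha> a \<in> pairs"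
      by (rule mem_S_block_pairs) blast
    have "p dvd \<alpha> m" if "m \<le> - 1" "- m < int n" for m
      using all[OF pairs[of "m + int n"]] that by (simp add: block_pair_def)
    then show "X \<in> toeplitz_lower n d M"
      unfolding X by (rule poly_toeplitz_mem_toeplitz_lower[OF M_carrier min_poly])
  qed
  with assms show False unfolding generic_alg_def by blast
qed

lemma block_nonzero:
  assumes "generic_alg n d M S" "1 \<le> \<bar>j\<bar>" "\<bar>j\<bar> \<le> int n - 1"
  shows "\<exists>B\<in>S. toeplitz_block d B j \<noteq> 0\<^sub>m d d"
proof (cases "1 \<le> j")
  case True
  obtain v where v: "v \<in> pairs" "\<not> p dvd fst v"
    using generic_exists_pair_fst_not_dvd[OF assms(1)] by blast
  have "poly_toeplitz n d M (pair_symbol n j v) \<in> S"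
    using poly_toeplitz_pair_symbol_mem_S[OF v(1)] True assms by simp
  moreover have "toeplitz_block d (poly_toeplitz n d M (pair_symbol n j v)) j \<noteq> 0\<^sub>m d d"
    using True assms v(2) M_carrier mat_poly_eval_eq_0_iff[OF M_carrier min_poly]
    by (simp add: pair_symbol_def)
  ultimately show ?thesis by blast
next
  case False
  obtain v where v: "v \<in> pairs" "\<not> p dvd snd v"
    using generic_exists_pair_snd_not_dvd[OF assms(1)] by blast
  have "poly_toeplitz n d M (pair_symbol n (j + int n) v) \<in> S"
    using poly_toeplitz_pair_symbol_mem_S[OF v(1)] False assms by simp
  moreover have "toeplitz_block d (poly_toeplitz n d M (pair_symbol n (j + int n) v)) j \<noteq> 0\<^sub>m d d"
    using False assms v(2) M_carrier mat_poly_eval_eq_0_iff[OF M_carrier min_poly]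
    by (simp add: pair_symbol_def)
  ultimately show ?thesis by blast
qed

end

theorem lemma7p2:
  fixes n d :: nat and M :: "complex mat" and p :: "complex poly" and \<B> :: "complex mat set"
  assumes "n \<ge> 2"
    and "M \<in> carrier_mat d d"
    and "nonderogatory d M"
    and "is_min_poly d M p"
    and "maximal_subalgebra_in (n*d) (toeplitz_set n d M) \<B>"
    and "generic_alg n d M \<B>"
  shows
    "(\<forall>j::int. 1 \<le> \<bar>j\<bar> \<and> \<bar>j\<bar> \<le> int n - 1 \<longrightarrow> (\<exists>B\<in>\<B>. toeplitz_block d B j \<noteq> 0\<^sub>m d d))
     \<and> (\<forall>j::int. 1 \<le> j \<and> j \<le> int n - 1 \<longrightarrow>
          block_gcd d M p \<B> j = block_gcd d M p \<B> 1 \<and> block_gcd d M p \<B> (-j) = block_gcd d M p \<B> (-1))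
     \<and> (\<forall>B\<in>\<B>. \<forall>j::int. 1 \<le> j \<and> j \<le> int n - 1 \<longrightarrow>
          (\<exists>b. toeplitz_block d B j = mat_poly_eval d M (block_gcd d M p \<B> 1) * mat_poly_eval d M b)
        \<and> (\<exists>b. toeplitz_block d B (-j) = mat_poly_eval d M (block_gcd d M p \<B> (-1)) * mat_poly_eval d M b))
     \<and> (\<exists>A\<in>\<B>. \<forall>j::int. 1 \<le> j \<and> j \<le> int n - 1 \<longrightarrow>
          (\<exists>a. toeplitz_block d A j = mat_poly_eval d M (block_gcd d M p \<B> 1) * mat_poly_eval d M a
               \<and> coprime a p)
        \<and> (\<exists>a. toeplitz_block d A (-j) = mat_poly_eval d M (block_gcd d M p \<B> (-1)) * mat_poly_eval d M a
               \<and> coprime a p))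
     \<and> (block_gcd d M p \<B> 1 * block_gcd d M p \<B> (-1) dvd p)"
proof -
  interpret maximal_toeplitz_algebra n d M p \<B>
    using assms by (simp add: maximal_toeplitz_algebra_def)
  have "1 \<le> int n - 1" using assms(1) by simp
  then have gcd_1: "block_gcd d M p \<B> 1 = s_plus" "block_gcd d M p \<B> (- 1) = s_minus"
    using block_gcd_upper[of 1] block_gcd_lower[of 1] by simp_all
  show ?thesis
    unfolding gcd_1
    using block_nonzero[OF assms(6)] block_gcd_upper block_gcd_lower
      upper_block_factor lower_block_factor exists_coprime_cofactors s_plus_s_minus_dvd
    by auto
qed

end
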